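(* Assume the model and the bounded-SNR assumption in the context, and fix $\varepsilon>0$. For a profile $\mathbf a$ and a player $n$ with $a_n\notin B_\varepsilon(\mathbf a_{-n})$, let $k$ be uniformly distributed on $B_{\varepsilon/2}(\mathbf a_{-n})$, let $\mathbf a'=(k,\mathbf a_{-n})$, and define $$\Delta_1=R_n(\mathbf a')-R_n(\mathbf a),\qquad \Delta_2=\sum_{m\ne n:\ a_m=k}\big(R_m(\mathbf a')-R_m(\mathbf a)\big).$$ Then the probability (over the random locations) that for every profile $\mathbf a$ and every player $n$ with $a_n\notin B_\varepsilon(\mathbf a_{-n})$ one has $\mathbb E_k[\Delta_1+\Delta_2]>0$ (expectation over the uniform choice of $k$) tends to $1$ as $N\to\infty$.
   Context: Model. Fix constants $\lambda>0$, $\alpha>0$, $G>0$, $\theta_T,\theta_R\in(0,2\pi]$, $P_0>0$, $N_0>0$ and a positive integer $S$. For each $N\ge2$ there are $N$ players $\mathcal N=\{1,\dots,N\}$ and a destination map $d:\mathcal N\to\mathcal N$, fixed independently of the player locations, with $d(n)\ne n$ for all $n$ and with every player being the destination of at most $S$ players. The number of channels is $K=N/l_N$ (an integer), where $l_N\ge1$ and $l_N\left(\frac{\log N}{N}\right)^{\frac{\alpha}{\alpha+2}}\to0$ as $N\to\infty$. The locations $x_1,\dots,x_N$ of the players are i.i.d. uniform on a fixed closed set $\mathcal D\subseteq\mathbb R^2$ of area $1/\lambda$. Each player has a transmit beam of angular width $\theta_T$ and a receive beam of angular width $\theta_R$, with fixed arbitrary orientations. For $i\ne j$, $r_{i,j}=\|x_i-x_j\|$;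 $\theta_{i,j}$ denotes the angle between the direction from $x_i$ to $x_j$ and the bisector of player $i$'s transmit beam when $i$ acts as transmitter, resp. of player $i$'s receive beam when $i$ acts as receiver. The channel gain from transmitter $m$ to receiver $d(n)$ is $g_{m,d(n)}=G\,r_{m,d(n)}^{-\alpha}\,\mathbf 1\{|\theta_{m,d(n)}|\le\theta_T/2\}\,\mathbf 1\{|\theta_{d(n),m}|\le\theta_R/2\}$ for $m\ne d(n)$ (angle of $m$ w.r.t. its transmit beam, angle of $d(n)$ w.r.t. its receive beam), and $g_{d(n),d(n)}=+\infty$. Player $n$ transmits with power $P_n\in(0,P_{\max}]$, $P_{\max}=P_0\left(\frac{\log N}{N}\right)^{\alpha/2}$ (the $P_n$ may depend on the locations). Game: each player chooses one channel $a_n\in\{1,\dots,K\}$; $\mathbf a=(a_1,\dots,a_N)$, $\mathbf a_{-n}$ is the profile of the others and $(k,\mathbf a_{-n})$ the profile where $n$ plays $k$. Interference: $I_n(\mathbf a)=\sum_{m\ne n:\,a_m=a_n}g_{m,d(n)}P_m$. Utility: $u_n(\mathbf a)=R_n(\mathbf a)=\log_2\!\big(1+\frac{g_{n,d(n)}P_n}{N_0+I_n(\mathbf a)}\big)$ (equal to $0$ if $I_n(\mathbf a)=\infty$). For $\varepsilon>0$, $B_\varepsilon(\mathbf a_{-n})=\{k:\ u_n(k,\mathbf a_{-n})+\varepsilon\ge\max_{k'}u_n(k',\mathbf a_{-n})\}$. A profile $\mathbf a$ is an $\varepsilon$-PNE if $a_n\in B_\varepsilon(\mathbf a_{-n})$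 for all $n$. All probabilities "over the random game" are with respect to the random locations, and limits are as $N\to\infty$ with all constants fixed. Bounded-SNR assumption: there is a constant $\sigma_{\max}$ (independent of $N$) such that $\sigma_n:=g_{n,d(n)}P_n/N_0\le\sigma_{\max}$ for all $n$. *)

theory Defs
  imports "HOL-Probability.Probability"
begin

text \<open>Locations live in the plane, modelled as real \<times> real. Players are 0..<N,
 channels are 0..<K.\<close>

text \<open>Unsigned angle (in [0,pi]) between a direction vector v and the bisector of a
 beam with orientation phi (the unit vector (cos phi, sin phi)).\<close>
definition beam_angle :: "real \<times> real \<Rightarrow> real \<Rightarrow> real" where
  "beam_angle v phi = arccos ((v \<bullet> (cos phi, sin phi)) / norm v)"

definition gain :: "real \<Rightarrow> real \<Rightarrow> real \<Rightarrow> real \<Rightarrow> (nat \<Rightarrow> real) \<Rightarrow> (nat \<Rightarrow> real)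
    \<Rightarrow> (nat \<Rightarrow> real \<times> real) \<Rightarrow> nat \<Rightarrow> nat \<Rightarrow> real" where
  "gain G \<alpha> \<theta>T \<theta>R phiT phiR x m j =
     G * dist (x m) (x j) powr (-\<alpha>)
       * (if beam_angle (x j - x m) (phiT m) \<le> \<theta>T / 2 then 1 else 0)
       * (if beam_angle (x m - x j) (phiR j) \<le> \<theta>R / 2 then 1 else 0)"

text \<open>Rate of player n under profile a. The interference is infinite exactly when the
 destination d n itself transmits on n's channel (gain g_{d n, d n} = +infinity); the
 rate is then 0.\<close>
definition rate :: "nat \<Rightarrow> real \<Rightarrow> (nat \<Rightarrow> nat) \<Rightarrow> (nat \<Rightarrow> nat \<Rightarrow> real) \<Rightarrow> (nat \<Rightarrow> real)
    \<Rightarrow> (nat \<Rightarrow> nat) \<Rightarrow> nat \<Rightarrow> real" where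
  "rate N N0 d g P a n =
     (if \<exists>m<N. m \<noteq> n \<and> a m = a n \<and> m = d n then 0
      else log 2 (1 + g n (d n) * P n /
             (N0 + (\<Sum>m\<in>{m. m < N \<and> m \<noteq> n \<and> a m = a n}. g m (d n) * P m))))"

definition best_resp :: "nat \<Rightarrow> ((nat \<Rightarrow> nat) \<Rightarrow> nat \<Rightarrow> real) \<Rightarrow> real
    \<Rightarrow> (nat \<Rightarrow> nat) \<Rightarrow> nat \<Rightarrow> nat set" where
  "best_resp K u eps a n =
     {k. k < K \<and> u (a(n := k)) n + eps \<ge> Max ((\<lambda>k'. u (a(n := k')) n) ` {..<K})}"

definition exp_delta :: "nat \<Rightarrow> nat \<Rightarrow> ((nat \<Rightarrow> nat) \<Rightarrow> nat \<Rightarrow> real) \<Rightarrow> real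
    \<Rightarrow> (nat \<Rightarrow> nat) \<Rightarrow> nat \<Rightarrow> real" where
  "exp_delta N K u eps a n =
     (let B = best_resp K u (eps / 2) a n in
      (\<Sum>k\<in>B. (u (a(n := k)) n - u a n)
              + (\<Sum>m\<in>{m. m < N \<and> m \<noteq> n \<and> a m = k}. u (a(n := k)) m - u a m))
      / real (card B))"

definition good_event :: "nat \<Rightarrow> nat \<Rightarrow> ((nat \<Rightarrow> nat) \<Rightarrow> nat \<Rightarrow> real) \<Rightarrow> real \<Rightarrow> bool" where
  "good_event N K u eps \<longleftrightarrow>
     (\<forall>a. (\<forall>m<N. a m < K) \<longrightarrow> (\<forall>n<N. a n \<notin> best_resp K u eps a n \<longrightarrow>
        exp_delta N K u eps a n > 0))"

end

theory Submission
  imports Defs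
begin

text \<open>Let r = (log N / N)^(\<alpha>/(2(\<alpha>+2))). Except with probability at most 1/N, no player has
  t \<approx> 4 e^2 \<lambda> N r^2 + 2 log N or more others within distance r (union bound over t-subsets,
  with t! \<ge> (t/e)^t); on this event the argument is deterministic. A transmitter farther than r
  from a receiver contributes interference at most c = G r^(-\<alpha>) P_max there. Every channel on
  which the interference at d(n) is below (2^(\<epsilon>/2) - 1) N0 lies in B_(\<epsilon>/2), and only the t
  near transmitters and the total far interference N c can make channels loud, so
  |B_(\<epsilon>/2)| \<ge> K - O(t + N c). A player outside B_\<epsilon> gains more than \<epsilon>/2 on each of these
  channels, while its moves to all of them together cost the others at most S (1 + t) times the
  maximal rate (victims whose receiver is near n) plus N c / (N0 ln 2). Both error terms are
  O(N (log N / N)^(\<alpha>/(\<alpha>+2))) = o(K).\<close>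

section \<open>Rates\<close>

lemma log2_one_plus_div_diff_le:
  fixes A s x :: real
  assumes "0 < A" "0 \<le> s" "0 \<le> x"
  shows "log 2 (1 + s / A) - log 2 (1 + s / (A + x)) \<le> log 2 (1 + x / A)"
proof -
  have pos: "0 < 1 + s / (A + x)" "0 < 1 + s / A" "0 < 1 + x / A"
    using assms by (simp_all add: add_pos_nonneg)
  have "(1 + x / A) * (1 + s / (A + x)) = (A + x) / A * ((A + x + s) / (A + x))"
    using assms by (simp add: field_simps)
  also have "\<dots> = (A + x + s) / A" using assms by (simp add: divide_simps)
  finally have "1 + s / A \<le> (1 + x / A) * (1 + s / (A + x))"
    using assms by (simp add: field_simps)
  hence "log 2 (1 + s / A) \<le> log 2 ((1 + x / A) * (1 + s / (A + x)))"
    using pos by simp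
  also have "\<dots> = log 2 (1 + x / A) + log 2 (1 + s / (A + x))"
    using pos by (simp add: log_mult)
  finally show ?thesis by simp
qed

lemma log2_one_plus_le:
  fixes y :: real assumes "0 \<le> y" shows "log 2 (1 + y) \<le> y / ln 2"
  using ln_add_one_self_le_self[OF assms] by (simp add: log_def divide_right_mono)

lemma log2_one_plus_mono:
  fixes y z :: real assumes "0 \<le> y" "y \<le> z" shows "log 2 (1 + y) \<le> log 2 (1 + z)"
  using assms by simp

lemma rate_eq:
  assumes "d n < N" "d n \<noteq> n"
  shows "rate N N0 d g P a n = (if a (d n) = a n then 0 else
     log 2 (1 + g n (d n) * P n / (N0 + (\<Sum>m | m < N \<and> m \<noteq> n \<and> a m = a n. g m (d n) * P m))))"
proof -
  have "(\<exists>m<N. m \<noteq> n \<and> a m = a n \<and> m = d n) \<longleftrightarrow> a (d n) = a n" using assms by auto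
  thus ?thesis unfolding rate_def by simp
qed

lemma best_resp_subset: "best_resp K u eps a n \<subseteq> {..<K}"
  unfolding best_resp_def by auto

lemma best_resp_gain_gt:
  assumes "a n < K" "a n \<notin> best_resp K u eps a n" "k \<in> best_resp K u (eps / 2) a n"
  shows "u (a(n := k)) n - u a n > eps / 2"
proof -
  have "a(n := a n) = a" by simp
  thus ?thesis using assms unfolding best_resp_def by force
qed

section \<open>A deterministic criterion\<close>

locale sparse_interference =
  fixes N :: nat and N0 \<sigma> c :: real and d :: "nat \<Rightarrow> nat"
    and g :: "nat \<Rightarrow> nat \<Rightarrow> real" and P :: "nat \<Rightarrow> real"
    and near :: "nat \<Rightarrow> nat \<Rightarrow> bool" and S T :: nat
  assumes N0_pos: "0 < N0"
    and dest: "n < N \<Longrightarrow> d n < N \<and> d n \<noteq> n"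
    and card_dest_le: "j < N \<Longrightarrow> card {m. m < N \<and> d m = j} \<le> S"
    and gain_nonneg: "0 \<le> g i j"
    and power_pos: "m < N \<Longrightarrow> 0 < P m"
    and snr_le: "m < N \<Longrightarrow> g m (d m) * P m / N0 \<le> \<sigma>"
    and near_sym: "near i j \<longleftrightarrow> near j i"
    and card_near_le: "i < N \<Longrightarrow> card {j. j < N \<and> j \<noteq> i \<and> near i j} \<le> T"
    and far_le: "i < N \<Longrightarrow> j < N \<Longrightarrow> i \<noteq> j \<Longrightarrow> \<not> near i j \<Longrightarrow> g i j * P i \<le> c"
    and c_nonneg: "0 \<le> c"
begin

abbreviation R :: "(nat \<Rightarrow> nat) \<Rightarrow> nat \<Rightarrow> real" where
  "R \<equiv> rate N N0 d g P"

definition rate_max :: real where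
  "rate_max = max 0 (log 2 (1 + \<sigma>))"

definition interference :: "(nat \<Rightarrow> nat) \<Rightarrow> nat \<Rightarrow> nat \<Rightarrow> real" where
  "interference a n k = (\<Sum>m | m < N \<and> m \<noteq> n \<and> a m = k. g m (d n) * P m)"

lemma received_nonneg: "m < N \<Longrightarrow> 0 \<le> g m j * P m"
  by (intro mult_nonneg_nonneg gain_nonneg less_imp_le[OF power_pos])

lemma interference_nonneg: "0 \<le> interference a n k"
  unfolding interference_def by (auto intro!: sum_nonneg received_nonneg)

lemma rate_nonneg_le_isolated:
  assumes "n < N"
  shows "0 \<le> R a n \<and> R a n \<le> log 2 (1 + g n (d n) * P n / N0)"
proof -
  define I where "I = (\<Sum>m | m < N \<and> m \<noteq> n \<and> a m = a n. g m (d n) * P m)"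
  have "0 \<le> I" unfolding I_def by (auto intro!: sum_nonneg received_nonneg)
  have s: "0 \<le> g n (d n) * P n" using received_nonneg assms .
  hence "0 \<le> g n (d n) * P n / (N0 + I)"
    using N0_pos \<open>0 \<le> I\<close> by simp
  moreover have "g n (d n) * P n / (N0 + I) \<le> g n (d n) * P n / N0"
    using N0_pos \<open>0 \<le> I\<close> s by (intro divide_left_mono) auto
  ultimately have "0 \<le> log 2 (1 + g n (d n) * P n / (N0 + I))"
      "log 2 (1 + g n (d n) * P n / (N0 + I)) \<le> log 2 (1 + g n (d n) * P n / N0)"
    by (simp, rule log2_one_plus_mono)
  thus ?thesis using rate_eq[of d n N] dest[OF assms] N0_pos s
    unfolding I_def by auto
qed

lemma rate_nonneg_le_max:
  assumes "m < N"
  shows "0 \<le> R a m \<and> R a m \<le> rate_max"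
proof -
  have "log 2 (1 + g m (d m) * P m / N0) \<le> log 2 (1 + \<sigma>)"
    using snr_le[OF assms] received_nonneg[OF assms] N0_pos by (intro log2_one_plus_mono) auto
  thus ?thesis using rate_nonneg_le_isolated[OF assms, of a] unfolding rate_max_def by auto
qed

lemma rate_update_self:
  assumes "n < N"
  shows "R (a(n := k)) n =
    (if a (d n) = k then 0 else log 2 (1 + g n (d n) * P n / (N0 + interference a n k)))"
proof -
  have "{m. m < N \<and> m \<noteq> n \<and> (a(n := k)) m = (a(n := k)) n} = {m. m < N \<and> m \<noteq> n \<and> a m = k}"
    by auto
  thus ?thesis using rate_eq[of d n N N0 g P "a(n := k)"] dest[OF assms]
    unfolding interference_def by simp
qed

lemma quiet_channels_subset_best_resp:
  assumes n: "n < N" and K: "0 < K"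
  shows "{k. k < K \<and> k \<noteq> a (d n) \<and> interference a n k < (2 powr (eps / 2) - 1) * N0}
    \<subseteq> best_resp K R (eps / 2) a n"
proof
  fix k assume k: "k \<in> {k. k < K \<and> k \<noteq> a (d n) \<and> interference a n k < (2 powr (eps / 2) - 1) * N0}"
  define Rn where "Rn = log 2 (1 + g n (d n) * P n / N0)"
  have max_le: "Max ((\<lambda>k'. R (a(n := k')) n) ` {..<K}) \<le> Rn"
    using K rate_nonneg_le_isolated[OF n] unfolding Rn_def by (subst Max_le_iff) auto
  have "Rn - R (a(n := k)) n \<le> log 2 (1 + interference a n k / N0)"
    using k rate_update_self[OF n]
      log2_one_plus_div_diff_le[OF N0_pos received_nonneg[OF n] interference_nonneg]
    unfolding Rn_def by simp
  also have "\<dots> < log 2 (1 + (2 powr (eps / 2) - 1))"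
  proof -
    have "interference a n k / N0 < 2 powr (eps / 2) - 1"
      using k N0_pos by (simp add: divide_less_eq)
    thus ?thesis using N0_pos interference_nonneg[of a n k]
      by (subst log_less_cancel_iff) (auto simp: add_pos_nonneg)
  qed
  also have "\<dots> = eps / 2" by simp
  finally show "k \<in> best_resp K R (eps / 2) a n"
    using k max_le unfolding best_resp_def by auto
qed

lemma card_far_loud_channels_le:
  assumes n: "n < N"
  shows "real (card {k. k < K \<and> k \<noteq> a (d n) \<and> \<theta> \<le> interference a n k \<and>
      (\<forall>m. m < N \<and> m \<noteq> n \<and> a m = k \<longrightarrow> \<not> near (d n) m)}) * \<theta> \<le> real N * c"
    (is "real (card ?H) * \<theta> \<le> _")
proof -
  define IS where "IS k = {m. m < N \<and> m \<noteq> n \<and> a m = k}" for k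
  have "real (card ?H) * \<theta> = (\<Sum>k\<in>?H. \<theta>)" by simp
  also have "\<dots> \<le> (\<Sum>k\<in>?H. interference a n k)" by (intro sum_mono) auto
  also have "\<dots> = (\<Sum>m\<in>(\<Union>k\<in>?H. IS k). g m (d n) * P m)"
    unfolding interference_def IS_def by (subst sum.UNION_disjoint) auto
  also have "\<dots> \<le> (\<Sum>m\<in>(\<Union>k\<in>?H. IS k). c)"
  proof (intro sum_mono)
    fix m assume "m \<in> (\<Union>k\<in>?H. IS k)"
    hence "m < N" "m \<noteq> d n" "\<not> near m (d n)" unfolding IS_def using near_sym by auto
    thus "g m (d n) * P m \<le> c" using far_le dest[OF n] by blast
  qed
  also have "\<dots> \<le> real N * c"
  proof -
    have "card (\<Union>k\<in>?H. IS k) \<le> card {..<N}" unfolding IS_def by (intro card_mono) auto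
    thus ?thesis using c_nonneg by (simp add: mult_right_mono)
  qed
  finally show ?thesis .
qed

lemma card_loud_channels_le:
  assumes n: "n < N" and \<theta>: "0 < \<theta>"
  shows "real (card {k. k < K \<and> k \<noteq> a (d n) \<and> \<theta> \<le> interference a n k})
    \<le> real T + real N * c / \<theta>"
proof -
  define NS where "NS = {m. m < N \<and> m \<noteq> d n \<and> near (d n) m}"
  define H where "H = {k. k < K \<and> k \<noteq> a (d n) \<and> \<theta> \<le> interference a n k \<and>
      (\<forall>m. m < N \<and> m \<noteq> n \<and> a m = k \<longrightarrow> \<not> near (d n) m)}"
  have "{k. k < K \<and> k \<noteq> a (d n) \<and> \<theta> \<le> interference a n k} \<subseteq> a ` NS \<union> H"
    unfolding NS_def H_def by auto
  moreover have "finite NS" "finite H" unfolding NS_def H_def by auto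
  ultimately have "card {k. k < K \<and> k \<noteq> a (d n) \<and> \<theta> \<le> interference a n k} \<le> card (a ` NS \<union> H)"
    by (intro card_mono) auto
  also have "\<dots> \<le> card (a ` NS) + card H" by (rule card_Un_le)
  finally have "card {k. k < K \<and> k \<noteq> a (d n) \<and> \<theta> \<le> interference a n k} \<le> card (a ` NS) + card H" .
  moreover have "card (a ` NS) \<le> T"
    using card_image_le[of NS a] card_near_le[OF conjunct1[OF dest[OF n]]] unfolding NS_def by simp
  moreover have "real (card H) \<le> real N * c / \<theta>"
    using card_far_loud_channels_le[OF n, of K a \<theta>] \<theta> unfolding H_def by (simp add: le_divide_eq)
  ultimately show ?thesis by linarith
qed

lemma card_best_resp_ge:
  assumes n: "n < N" and K: "0 < K" and eps: "0 < eps"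
  shows "real K - (1 + real T + real N * c / ((2 powr (eps / 2) - 1) * N0))
    \<le> real (card (best_resp K R (eps / 2) a n))"
proof -
  define \<theta> where "\<theta> = (2 powr (eps / 2) - 1) * N0"
  define Q where "Q = {k. k < K \<and> k \<noteq> a (d n) \<and> interference a n k < \<theta>}"
  define L where "L = {k. k < K \<and> k \<noteq> a (d n) \<and> \<theta> \<le> interference a n k}"
  have \<theta>_pos: "0 < \<theta>" unfolding \<theta>_def using eps N0_pos by simp
  have "{..<K} \<subseteq> insert (a (d n)) (Q \<union> L)" unfolding Q_def L_def by auto
  hence "K \<le> Suc (card Q + card L)"
  proof -
    have fin: "finite (Q \<union> L)" unfolding Q_def L_def by auto
    have "K \<le> card (insert (a (d n)) (Q \<union> L))"
      using card_mono[OF finite_insert[THEN iffD2, OF fin] \<open>{..<K} \<subseteq> _\<close>] by simp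
    also have "\<dots> \<le> Suc (card (Q \<union> L))" using fin by (simp add: card_insert_if)
    finally show ?thesis using card_Un_le[of Q L] by simp
  qed
  moreover have "card Q \<le> card (best_resp K R (eps / 2) a n)"
    using quiet_channels_subset_best_resp[OF n K] best_resp_subset
    unfolding Q_def \<theta>_def by (meson card_mono finite_lessThan finite_subset)
  moreover have "real (card L) \<le> real T + real N * c / \<theta>"
    using card_loud_channels_le[OF n \<theta>_pos] unfolding L_def .
  ultimately show ?thesis unfolding \<theta>_def by linarith
qed

definition loss_bound :: "nat \<Rightarrow> nat \<Rightarrow> real" where
  "loss_bound n m = (if d m = n \<or> near n (d m) then rate_max else c / (N0 * ln 2))"

lemma loss_bound_nonneg: "0 \<le> loss_bound n m"
  unfolding loss_bound_def rate_max_def using c_nonneg N0_pos by simp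

lemma rate_loss_far_le:
  assumes m: "m < N" and n: "n < N" "n \<noteq> m" and far: "d m \<noteq> n" "\<not> near n (d m)"
  shows "R a m - R (a(n := a m)) m \<le> c / (N0 * ln 2)"
proof (cases "a n = a m \<or> a (d m) = a m")
  case True
  have "R (a(n := a m)) m = R a m"
  proof (cases "a n = a m")
    case False
    hence "a (d m) = a m" using True by simp
    thus ?thesis using rate_eq[of d m N N0 g P] dest[OF m] far(1) by simp
  qed (simp add: fun_upd_idem)
  thus ?thesis using c_nonneg N0_pos by simp
next
  case False
  define I where "I = (\<Sum>j | j < N \<and> j \<noteq> m \<and> a j = a m. g j (d m) * P j)"
  define x where "x = g n (d m) * P n"
  define s where "s = g m (d m) * P m"
  have I_nonneg: "0 \<le> I" unfolding I_def by (auto intro!: sum_nonneg received_nonneg)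
  have x_nonneg: "0 \<le> x" and s_nonneg: "0 \<le> s"
    unfolding x_def s_def using received_nonneg m n by auto
  have interferers: "{j. j < N \<and> j \<noteq> m \<and> (a(n := a m)) j = (a(n := a m)) m}
      = insert n {j. j < N \<and> j \<noteq> m \<and> a j = a m}"
    using m n by auto
  have "(\<Sum>j | j < N \<and> j \<noteq> m \<and> (a(n := a m)) j = (a(n := a m)) m. g j (d m) * P j) = x + I"
    unfolding I_def x_def interferers using False by simp
  hence "R (a(n := a m)) m = log 2 (1 + s / (N0 + I + x))"
    using rate_eq[of d m N N0 g P "a(n := a m)"] dest[OF m] False far(1)
    by (simp add: s_def add_ac)
  moreover have "R a m = log 2 (1 + s / (N0 + I))"
    using rate_eq[of d m N N0 g P a] dest[OF m] False by (simp add: s_def I_def)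
  ultimately have "R a m - R (a(n := a m)) m \<le> log 2 (1 + x / (N0 + I))"
    using log2_one_plus_div_diff_le[of "N0 + I" s x] N0_pos I_nonneg s_nonneg x_nonneg by simp
  also have "\<dots> \<le> log 2 (1 + x / N0)"
    using N0_pos I_nonneg x_nonneg by (intro log2_one_plus_mono divide_left_mono) auto
  also have "\<dots> \<le> x / N0 / ln 2" using x_nonneg N0_pos by (intro log2_one_plus_le) simp
  also have "\<dots> \<le> c / N0 / ln 2"
    using far_le[OF n(1) conjunct1[OF dest[OF m]]] dest[OF m] far N0_pos
    unfolding x_def by (intro divide_right_mono) auto
  finally show ?thesis by simp
qed

lemma rate_loss_le:
  assumes m: "m < N" and n: "n < N" "n \<noteq> m"
  shows "R a m - R (a(n := a m)) m \<le> loss_bound n m"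
proof (cases "d m = n \<or> near n (d m)")
  case True
  thus ?thesis
    using rate_nonneg_le_max[OF m, of a] rate_nonneg_le_max[OF m, of "a(n := a m)"]
    unfolding loss_bound_def by auto
next
  case False
  thus ?thesis using rate_loss_far_le[OF assms] unfolding loss_bound_def by auto
qed

lemma card_close_victims_le:
  assumes n: "n < N"
  shows "card {m. m < N \<and> (d m = n \<or> near n (d m))} \<le> S * (1 + T)"
proof -
  define J where "J = insert n {j. j < N \<and> j \<noteq> n \<and> near n j}"
  have "finite J" unfolding J_def by auto
  have "card J \<le> Suc (card {j. j < N \<and> j \<noteq> n \<and> near n j})"
    unfolding J_def by (simp add: card_insert_if)
  hence "card J \<le> 1 + T" using card_near_le[OF n] by simp
  have "{m. m < N \<and> (d m = n \<or> near n (d m))} \<subseteq> (\<Union>j\<in>J. {m. m < N \<and> d m = j})"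
    unfolding J_def using dest by auto
  hence "card {m. m < N \<and> (d m = n \<or> near n (d m))} \<le> card (\<Union>j\<in>J. {m. m < N \<and> d m = j})"
    using \<open>finite J\<close> by (intro card_mono) auto
  also have "\<dots> \<le> (\<Sum>j\<in>J. card {m. m < N \<and> d m = j})" by (rule card_UN_le[OF \<open>finite J\<close>])
  also have "\<dots> \<le> (\<Sum>j\<in>J. S)" using card_dest_le n by (intro sum_mono) (auto simp: J_def)
  also have "\<dots> = card J * S" by simp
  also have "\<dots> \<le> S * (1 + T)" using \<open>card J \<le> 1 + T\<close> by (metis mult.commute mult_le_mono2)
  finally show ?thesis .
qed

lemma sum_loss_bound_le:
  assumes n: "n < N"
  shows "(\<Sum>m | m < N \<and> m \<noteq> n. loss_bound n m)
    \<le> rate_max * real S * (1 + real T) + real N * c / (N0 * ln 2)"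
proof -
  define A where "A = {m. m < N \<and> m \<noteq> n}"
  define V where "V = {m. d m = n \<or> near n (d m)}"
  have "finite A" unfolding A_def by auto
  have "card (A \<inter> V) \<le> card {m. m < N \<and> (d m = n \<or> near n (d m))}"
    unfolding A_def V_def by (intro card_mono) auto
  hence "card (A \<inter> V) \<le> S * (1 + T)" using card_close_victims_le[OF n] by linarith
  hence card_AV: "real (card (A \<inter> V)) \<le> real S * (1 + real T)"
    by (metis of_nat_1 of_nat_add of_nat_le_iff of_nat_mult)
  have card_A: "real (card (A \<inter> - V)) \<le> real N"
    using card_mono[of "{..<N}" "A \<inter> - V"] unfolding A_def by auto
  have "(\<Sum>m\<in>A. loss_bound n m)
      = real (card (A \<inter> V)) * rate_max + real (card (A \<inter> - V)) * (c / (N0 * ln 2))"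
    unfolding loss_bound_def V_def by (subst sum.If_cases[OF \<open>finite A\<close>]) simp
  also have "\<dots> \<le> (real S * (1 + real T)) * rate_max + real N * (c / (N0 * ln 2))"
    using card_AV card_A c_nonneg N0_pos rate_max_def
    by (intro add_mono mult_right_mono) auto
  finally show ?thesis unfolding A_def by (simp add: mult_ac)
qed

lemma sum_neighbour_gains_ge:
  assumes n: "n < N" and "finite B"
  shows "- (rate_max * real S * (1 + real T) + real N * c / (N0 * ln 2))
    \<le> (\<Sum>k\<in>B. \<Sum>m | m < N \<and> m \<noteq> n \<and> a m = k. R (a(n := k)) m - R a m)"
proof -
  define IS where "IS k = {m. m < N \<and> m \<noteq> n \<and> a m = k}" for k
  have "(\<Sum>k\<in>B. \<Sum>m\<in>IS k. loss_bound n m) = (\<Sum>m\<in>(\<Union>k\<in>B. IS k). loss_bound n m)"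
    using \<open>finite B\<close> unfolding IS_def by (subst sum.UNION_disjoint) auto
  also have "\<dots> \<le> (\<Sum>m | m < N \<and> m \<noteq> n. loss_bound n m)"
    using loss_bound_nonneg by (intro sum_mono2) (auto simp: IS_def)
  also have "\<dots> \<le> rate_max * real S * (1 + real T) + real N * c / (N0 * ln 2)"
    by (rule sum_loss_bound_le[OF n])
  finally have "- (rate_max * real S * (1 + real T) + real N * c / (N0 * ln 2))
      \<le> (\<Sum>k\<in>B. \<Sum>m\<in>IS k. - loss_bound n m)"
    by (simp add: sum_negf)
  also have "\<dots> \<le> (\<Sum>k\<in>B. \<Sum>m\<in>IS k. R (a(n := k)) m - R a m)"
  proof (intro sum_mono)
    fix k m assume "m \<in> IS k"
    hence "m < N" "n \<noteq> m" "a m = k" unfolding IS_def by auto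
    thus "- loss_bound n m \<le> R (a(n := k)) m - R a m"
      using rate_loss_le[OF _ n, of m a] by simp
  qed
  finally show ?thesis unfolding IS_def .
qed

theorem good_event_if_many_channels:
  assumes eps: "0 < eps"
    and many: "2 / eps * (rate_max * real S * (1 + real T) + real N * c / (N0 * ln 2))
      < real K - (1 + real T + real N * c / ((2 powr (eps / 2) - 1) * N0))"
  shows "good_event N K R eps"
  unfolding good_event_def
proof (intro allI impI)
  fix a n assume aK: "\<forall>m<N. a m < K" and n: "n < N" and not_best: "a n \<notin> best_resp K R eps a n"
  define B where "B = best_resp K R (eps / 2) a n"
  define L where "L = rate_max * real S * (1 + real T) + real N * c / (N0 * ln 2)"
  have "finite B" unfolding B_def by (rule finite_subset[OF best_resp_subset]) simp
  have "0 \<le> L" unfolding L_def rate_max_def using c_nonneg N0_pos by simp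
  have "0 < K" using aK n by fastforce
  hence "2 / eps * L < real (card B)"
    using many card_best_resp_ge[OF n _ eps, of K a] unfolding B_def L_def by linarith
  hence "L < real (card B) * (eps / 2)"
    using mult_strict_right_mono[of "2 / eps * L" "real (card B)" "eps / 2"] eps by simp
  have "0 \<le> 2 / eps * L" using eps \<open>0 \<le> L\<close> by simp
  hence "0 < card B" using \<open>2 / eps * L < _\<close> by simp
  have "real (card B) * (eps / 2) = (\<Sum>k\<in>B. eps / 2)" by simp
  also have "\<dots> < (\<Sum>k\<in>B. R (a(n := k)) n - R a n)"
    using \<open>finite B\<close> \<open>0 < card B\<close> best_resp_gain_gt[OF _ not_best] aK n
    by (intro sum_strict_mono) (auto simp: B_def)
  finally have "real (card B) * (eps / 2) < (\<Sum>k\<in>B. R (a(n := k)) n - R a n)" .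
  moreover have "- L \<le> (\<Sum>k\<in>B. \<Sum>m | m < N \<and> m \<noteq> n \<and> a m = k. R (a(n := k)) m - R a m)"
    using sum_neighbour_gains_ge[OF n \<open>finite B\<close>] unfolding L_def .
  ultimately have "0 < (\<Sum>k\<in>B. (R (a(n := k)) n - R a n)
      + (\<Sum>m | m < N \<and> m \<noteq> n \<and> a m = k. R (a(n := k)) m - R a m))"
    using \<open>L < _\<close> unfolding sum.distrib by linarith
  thus "exp_delta N K R eps a n > 0"
    unfolding exp_delta_def Let_def B_def[symmetric] using \<open>0 < card B\<close> by simp
qed

end

section \<open>Clusters of independent uniform points\<close>

lemma emeasure_lborel_cball_le:
  fixes y :: "real \<times> real" assumes "0 \<le> r"
  shows "emeasure lborel (cball y r) \<le> ennreal (4 * r\<^sup>2)"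
proof -
  define Q where "Q = {fst y - r .. fst y + r} \<times> {snd y - r .. snd y + r}"
  have "cball y r \<subseteq> Q"
  proof
    fix z assume "z \<in> cball y r"
    hence "dist (fst y) (fst z) \<le> r" "dist (snd y) (snd z) \<le> r"
      using dist_fst_le[of y z] dist_snd_le[of y z] by auto
    thus "z \<in> Q" unfolding Q_def dist_real_def by (auto simp: mem_Times_iff)
  qed
  hence "emeasure lborel (cball y r) \<le> emeasure lborel Q"
    by (rule emeasure_mono) (simp add: Q_def borel_closed closed_Times)
  also have "\<dots> = emeasure (lborel \<Otimes>\<^sub>M lborel) Q" by (simp only: lborel_prod)
  also have "\<dots> = ennreal (2 * r) * ennreal (2 * r)"
    unfolding Q_def using assms by (subst lborel.emeasure_pair_measure_Times) auto
  also have "\<dots> = ennreal (4 * r\<^sup>2)"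
    using assms by (simp add: ennreal_mult[symmetric] power2_eq_square)
  finally show ?thesis .
qed

lemma emeasure_uniform_measure_cball_le:
  fixes y :: "real \<times> real" and D :: "(real \<times> real) set"
  assumes "D \<in> sets lborel" "emeasure lborel D = ennreal (1 / lam)" "0 < lam" "0 \<le> r"
  shows "emeasure (uniform_measure lborel D) (cball y r) \<le> ennreal (4 * lam * r\<^sup>2)"
proof -
  have "emeasure (uniform_measure lborel D) (cball y r)
      = emeasure lborel (D \<inter> cball y r) / emeasure lborel D"
    by (rule emeasure_uniform_measure[OF assms(1)]) (simp add: borel_closed)
  also have "\<dots> \<le> emeasure lborel (cball y r) / ennreal (1 / lam)"
    unfolding assms(2) by (intro divide_right_mono_ennreal emeasure_mono) (auto simp: borel_closed)
  also have "\<dots> \<le> ennreal (4 * r\<^sup>2) / ennreal (1 / lam)"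
    by (intro divide_right_mono_ennreal emeasure_lborel_cball_le assms(4))
  also have "\<dots> = ennreal (4 * lam * r\<^sup>2)"
    using assms by (subst divide_ennreal) auto
  finally show ?thesis .
qed

lemma sets_PiM_all_dist_le:
  fixes M :: "'a::{second_countable_topology, metric_space} measure"
  assumes "i \<in> I" "U \<subseteq> I" "finite U" "sets M = sets borel"
  shows "{x \<in> space (PiM I (\<lambda>_. M)). \<forall>j\<in>U. dist (x i) (x j) \<le> r} \<in> sets (PiM I (\<lambda>_. M))"
proof -
  have component: "k \<in> I \<Longrightarrow> (\<lambda>x. x k) \<in> borel_measurable (PiM I (\<lambda>_. M))" for k
    using measurable_component_singleton[of k I "\<lambda>_. M"]
    by (subst (asm) measurable_cong_sets[OF refl assms(4)])
  have "(\<lambda>x. dist (x i) (x j)) \<in> borel_measurable (PiM I (\<lambda>_. M))" if "j \<in> U" for j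
    using that assms(1,2) by (intro borel_measurable_dist component) auto
  hence "{x \<in> space (PiM I (\<lambda>_. M)). dist (x i) (x j) \<le> r} \<in> sets (PiM I (\<lambda>_. M))" if "j \<in> U" for j
    using that by (simp add: borel_measurable_iff_le)
  thus ?thesis using assms(3) by (intro sets.sets_Collect_finite_All) auto
qed

lemma PiM_all_in_cball_eq_PiE:
  fixes \<mu> :: "'a::metric_space measure"
  assumes "sets \<mu> = sets borel" "U \<subseteq> I"
  shows "{x \<in> space (PiM I (\<lambda>_. \<mu>)). \<forall>j\<in>U. dist y (x j) \<le> r}
    = PiE I (\<lambda>j. if j \<in> U then cball y r else space \<mu>)"
  using assms sets_eq_imp_space_eq[OF assms(1)] by (auto simp: space_PiM PiE_def Pi_def)

lemma emeasure_PiM_all_in_cball: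
  fixes \<mu> :: "'a::metric_space measure"
  assumes \<mu>: "prob_space \<mu>" "sets \<mu> = sets borel" and I: "finite I" "U \<subseteq> I"
  shows "{x \<in> space (PiM I (\<lambda>_. \<mu>)). \<forall>j\<in>U. dist y (x j) \<le> r} \<in> sets (PiM I (\<lambda>_. \<mu>))"
    and "emeasure (PiM I (\<lambda>_. \<mu>)) {x \<in> space (PiM I (\<lambda>_. \<mu>)). \<forall>j\<in>U. dist y (x j) \<le> r}
      = emeasure \<mu> (cball y r) ^ card U"
proof -
  interpret prob_space \<mu> by (rule \<mu>(1))
  interpret product_sigma_finite "\<lambda>_. \<mu>" by unfold_locales
  define C where "C j = (if j \<in> U then cball y r else space \<mu>)" for j
  have "cball y r \<in> sets \<mu>" unfolding \<mu>(2) by (simp add: borel_closed)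
  hence C_sets: "C j \<in> sets \<mu>" for j unfolding C_def by simp
  note eq = PiM_all_in_cball_eq_PiE[OF \<mu>(2) I(2), of y r, folded C_def]
  show "{x \<in> space (PiM I (\<lambda>_. \<mu>)). \<forall>j\<in>U. dist y (x j) \<le> r} \<in> sets (PiM I (\<lambda>_. \<mu>))"
    unfolding eq using C_sets by (rule sets_PiM_I_finite[OF I(1)])
  have "emeasure (PiM I (\<lambda>_. \<mu>)) (PiE I C) = (\<Prod>j\<in>I. if j \<in> U then emeasure \<mu> (cball y r) else 1)"
    unfolding emeasure_PiM[OF I(1) C_sets] C_def using emeasure_space_1 by (intro prod.cong) auto
  also have "\<dots> = emeasure \<mu> (cball y r) ^ card {j \<in> I. j \<in> U}"
    using prod.inter_filter[OF I(1), of "\<lambda>_. emeasure \<mu> (cball y r)" "\<lambda>j. j \<in> U"] by simp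
  also have "{j \<in> I. j \<in> U} = U" using I(2) by blast
  finally show "emeasure (PiM I (\<lambda>_. \<mu>)) {x \<in> space (PiM I (\<lambda>_. \<mu>)). \<forall>j\<in>U. dist y (x j) \<le> r}
      = emeasure \<mu> (cball y r) ^ card U"
    unfolding eq .
qed

text \<open>Integrate out the coordinate i first: given x i = y, the points x j, j \<in> U, must
  independently fall into cball y r.\<close>
lemma emeasure_PiM_all_close_le:
  fixes \<mu> :: "'a::{second_countable_topology, metric_space} measure"
  assumes \<mu>: "prob_space \<mu>" "sets \<mu> = sets borel"
    and ball: "\<And>y. emeasure \<mu> (cball y r) \<le> ennreal p" and p: "0 \<le> p"
    and I: "finite I" "i \<notin> I" "U \<subseteq> I"
  shows "emeasure (PiM (insert i I) (\<lambda>_. \<mu>))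
      {x \<in> space (PiM (insert i I) (\<lambda>_. \<mu>)). \<forall>j\<in>U. dist (x i) (x j) \<le> r} \<le> ennreal (p ^ card U)"
proof -
  interpret prob_space \<mu> by (rule \<mu>(1))
  interpret product_sigma_finite "\<lambda>_. \<mu>" by unfold_locales
  have space: "space \<mu> = UNIV" using sets_eq_imp_space_eq[OF \<mu>(2)] by simp
  define E where "E = {x \<in> space (PiM (insert i I) (\<lambda>_. \<mu>)). \<forall>j\<in>U. dist (x i) (x j) \<le> r}"
  define E' where "E' y = {x \<in> space (PiM I (\<lambda>_. \<mu>)). \<forall>j\<in>U. dist y (x j) \<le> r}" for y
  have E_sets: "E \<in> sets (PiM (insert i I) (\<lambda>_. \<mu>))" unfolding E_def
    using I \<mu>(2) by (intro sets_PiM_all_dist_le) (auto intro: finite_subset)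
  have "emeasure (PiM (insert i I) (\<lambda>_. \<mu>)) E = (\<integral>\<^sup>+ x. indicator E x \<partial>PiM (insert i I) (\<lambda>_. \<mu>))"
    using E_sets by simp
  also have "\<dots> = (\<integral>\<^sup>+ y. (\<integral>\<^sup>+ x. indicator E (x(i := y)) \<partial>PiM I (\<lambda>_. \<mu>)) \<partial>\<mu>)"
    using I E_sets by (intro product_nn_integral_insert_rev) auto
  also have "\<dots> = (\<integral>\<^sup>+ y. emeasure (PiM I (\<lambda>_. \<mu>)) (E' y) \<partial>\<mu>)"
  proof (intro nn_integral_cong)
    fix y
    have "indicator E (x(i := y)) = (indicator (E' y) x :: ennreal)"
      if "x \<in> space (PiM I (\<lambda>_. \<mu>))" for x
      using that I by (auto simp: E_def E'_def space_PiM space PiE_def extensional_def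
          indicator_def dist_commute)
    hence "(\<integral>\<^sup>+ x. indicator E (x(i := y)) \<partial>PiM I (\<lambda>_. \<mu>))
        = (\<integral>\<^sup>+ x. indicator (E' y) x \<partial>PiM I (\<lambda>_. \<mu>))"
      by (intro nn_integral_cong) auto
    also have "\<dots> = emeasure (PiM I (\<lambda>_. \<mu>)) (E' y)"
      unfolding E'_def using emeasure_PiM_all_in_cball(1)[OF \<mu> I(1,3)] by simp
    finally show "(\<integral>\<^sup>+ x. indicator E (x(i := y)) \<partial>PiM I (\<lambda>_. \<mu>))
        = emeasure (PiM I (\<lambda>_. \<mu>)) (E' y)" .
  qed
  also have "\<dots> \<le> (\<integral>\<^sup>+ y. ennreal (p ^ card U) \<partial>\<mu>)"
  proof (intro nn_integral_mono)
    fix y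
    have "emeasure (PiM I (\<lambda>_. \<mu>)) (E' y) = emeasure \<mu> (cball y r) ^ card U"
      unfolding E'_def using emeasure_PiM_all_in_cball(2)[OF \<mu> I(1,3)] .
    also have "\<dots> \<le> ennreal p ^ card U" by (intro power_mono ball) simp
    finally show "emeasure (PiM I (\<lambda>_. \<mu>)) (E' y) \<le> ennreal (p ^ card U)"
      using p by (simp add: ennreal_power)
  qed
  also have "\<dots> = ennreal (p ^ card U)" using emeasure_space_1 by simp
  finally show ?thesis unfolding E_def .
qed

lemma pow_div_fact_le_exp:
  fixes y :: real assumes "0 \<le> y" shows "y ^ t / fact t \<le> exp y"
proof -
  have s: "(\<lambda>n. y^n /\<^sub>R fact n) sums exp y" by (rule exp_converges)
  have "y ^ t / fact t \<le> (\<Sum>n. y^n /\<^sub>R fact n)"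
    using s assms
    by (intro order.trans[OF _ sum_le_suminf[of _ "{t}"]])
      (auto simp: sums_iff divide_inverse_commute)
  thus ?thesis using s by (simp add: sums_iff)
qed

lemma choose_le_pow_div_fact:
  "real (n choose k) \<le> real n ^ k / fact k"
proof (cases "k \<le> n")
  case True
  have "fact k * fact (n - k) * (n choose k) = fact n" using binomial_fact_lemma[OF True] .
  hence "fact k * (n choose k) = fact n div fact (n - k)"
    by (metis fact_nonzero nonzero_mult_div_cancel_right mult.commute mult.assoc)
  also have "\<dots> \<le> n ^ k" using fact_div_fact_le_pow[OF True] .
  finally have "real (fact k * (n choose k)) \<le> real (n ^ k)" by linarith
  thus ?thesis by (simp add: field_simps)
next
  case False thus ?thesis by (simp add: binomial_eq_0)
qed

lemma card_subsets_le_pow_div_fact: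
  assumes "finite A"
  shows "real (card {U. U \<subseteq> A \<and> card U = t}) \<le> real (card A) ^ t / fact t"
  using choose_le_pow_div_fact[of "card A" t] n_subsets[OF assms] by simp

definition clustered :: "nat \<Rightarrow> nat \<Rightarrow> real \<Rightarrow> (nat \<Rightarrow> 'a::metric_space) set" where
  "clustered N t r = {x. \<exists>i<N. t \<le> card {j. j < N \<and> j \<noteq> i \<and> dist (x i) (x j) \<le> r}}"

lemma clustered_eq_Union:
  "clustered N t r = (\<Union>i<N. \<Union>U\<in>{U. U \<subseteq> {..<N} - {i} \<and> card U = t}.
     {x. \<forall>j\<in>U. dist (x i) (x j) \<le> r})"
proof (intro equalityI subsetI)
  fix x assume "x \<in> clustered N t r"
  then obtain i where "i < N" and "t \<le> card {j. j < N \<and> j \<noteq> i \<and> dist (x i) (x j) \<le> r}"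
    unfolding clustered_def by blast
  then obtain U where "U \<subseteq> {j. j < N \<and> j \<noteq> i \<and> dist (x i) (x j) \<le> r}" "card U = t"
    by (meson obtain_subset_with_card_n)
  thus "x \<in> (\<Union>i<N. \<Union>U\<in>{U. U \<subseteq> {..<N} - {i} \<and> card U = t}. {x. \<forall>j\<in>U. dist (x i) (x j) \<le> r})"
    using \<open>i < N\<close> by blast
next
  fix x assume "x \<in> (\<Union>i<N. \<Union>U\<in>{U. U \<subseteq> {..<N} - {i} \<and> card U = t}. {x. \<forall>j\<in>U. dist (x i) (x j) \<le> r})"
  then obtain i U where "i < N" "U \<subseteq> {..<N} - {i}" "card U = t" "\<forall>j\<in>U. dist (x i) (x j) \<le> r"
    by blast
  hence "U \<subseteq> {j. j < N \<and> j \<noteq> i \<and> dist (x i) (x j) \<le> r}" by auto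
  hence "t \<le> card {j. j < N \<and> j \<noteq> i \<and> dist (x i) (x j) \<le> r}"
    using \<open>card U = t\<close> card_mono[of _ U] by fastforce
  thus "x \<in> clustered N t r" unfolding clustered_def using \<open>i < N\<close> by blast
qed

lemma measure_clustered_le:
  fixes \<mu> :: "'a::{second_countable_topology, metric_space} measure"
  assumes \<mu>: "prob_space \<mu>" "sets \<mu> = sets borel"
    and ball: "\<And>y. emeasure \<mu> (cball y r) \<le> ennreal p" and p: "0 \<le> p"
  shows "space (PiM {..<N} (\<lambda>_. \<mu>)) \<inter> clustered N t r \<in> sets (PiM {..<N} (\<lambda>_. \<mu>))"
    and "measure (PiM {..<N} (\<lambda>_. \<mu>)) (space (PiM {..<N} (\<lambda>_. \<mu>)) \<inter> clustered N t r)
      \<le> real N * (real N ^ t / fact t) * p ^ t"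
proof -
  define M where "M = PiM {..<N} (\<lambda>_. \<mu>)"
  define E where "E i U = {x \<in> space M. \<forall>j\<in>U. dist (x i) (x j) \<le> r}" for i U
  define Sub where "Sub i = {U. U \<subseteq> {..<N} - {i} \<and> card U = t}" for i
  interpret prob_space M unfolding M_def by (intro prob_space_PiM \<mu>(1))
  have clustered: "space M \<inter> clustered N t r = (\<Union>i<N. \<Union>U\<in>Sub i. E i U)"
    unfolding clustered_eq_Union E_def Sub_def by blast
  have Sub_finite: "finite (Sub i)" for i
    unfolding Sub_def by (rule finite_subset[of _ "Pow {..<N}"]) auto
  have E_sets: "E i U \<in> sets M" if "i < N" "U \<in> Sub i" for i U
    unfolding E_def M_def using that \<mu>(2)
    by (intro sets_PiM_all_dist_le) (auto simp: Sub_def intro: finite_subset)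
  have E_measure: "measure M (E i U) \<le> p ^ t" if "i < N" "U \<in> Sub i" for i U
  proof -
    have "insert i ({..<N} - {i}) = {..<N}" using that by auto
    hence "emeasure M (E i U) \<le> ennreal (p ^ card U)"
      using emeasure_PiM_all_close_le[OF \<mu> ball p, of "{..<N} - {i}" i U] that
      unfolding E_def M_def Sub_def by auto
    thus ?thesis using that p unfolding Sub_def by (simp add: emeasure_eq_measure)
  qed
  have card_Sub: "real (card (Sub i)) \<le> real N ^ t / fact t" if "i < N" for i
  proof -
    have "real (card (Sub i)) \<le> real (N - 1) ^ t / fact t"
      using card_subsets_le_pow_div_fact[of "{..<N} - {i}" t] that unfolding Sub_def by simp
    also have "\<dots> \<le> real N ^ t / fact t" by (intro divide_right_mono power_mono) auto
    finally show ?thesis .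
  qed
  have UN_sets: "(\<Union>U\<in>Sub i. E i U) \<in> sets M" if "i < N" for i
    using E_sets[OF that] Sub_finite by (intro sets.finite_UN) auto
  show "space (PiM {..<N} (\<lambda>_. \<mu>)) \<inter> clustered N t r \<in> sets (PiM {..<N} (\<lambda>_. \<mu>))"
    unfolding M_def[symmetric] clustered using UN_sets by (rule sets.finite_UN[rotated]) auto
  have "measure M (\<Union>i<N. \<Union>U\<in>Sub i. E i U) \<le> (\<Sum>i<N. measure M (\<Union>U\<in>Sub i. E i U))"
    using UN_sets by (intro measure_UNION_le) auto
  also have "\<dots> \<le> (\<Sum>i<N. \<Sum>U\<in>Sub i. measure M (E i U))"
    using E_sets Sub_finite by (intro sum_mono measure_UNION_le) auto
  also have "\<dots> \<le> (\<Sum>i<N. real (card (Sub i)) * p ^ t)"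
    using E_measure by (intro sum_mono) (simp add: sum_bounded_above)
  also have "\<dots> \<le> (\<Sum>i<N. (real N ^ t / fact t) * p ^ t)"
    using card_Sub p by (intro sum_mono mult_right_mono) auto
  finally show "measure (PiM {..<N} (\<lambda>_. \<mu>)) (space (PiM {..<N} (\<lambda>_. \<mu>)) \<inter> clustered N t r)
      \<le> real N * (real N ^ t / fact t) * p ^ t"
    unfolding M_def[symmetric] unfolding clustered by (simp add: mult.assoc)
qed

lemma union_bound_tail_le:
  fixes n p :: real and t :: nat
  assumes n: "2 \<le> n" and p: "0 \<le> p"
    and t: "exp 2 * (n * p) \<le> real t" "2 * ln n \<le> real t"
  shows "n * (n ^ t / fact t) * p ^ t \<le> 1 / n"
proof -
  have t_pos: "0 < real t" using t(2) n by (smt (verit) ln_gt_zero)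
  have "n ^ t / fact t * p ^ t = (n * p / real t) ^ t * (real t ^ t / fact t)"
    using t_pos by (simp add: power_mult_distrib power_divide)
  also have "\<dots> \<le> exp (-2) ^ t * exp (real t)"
  proof (intro mult_mono power_mono pow_div_fact_le_exp)
    show "n * p / real t \<le> exp (-2)"
      using t(1) t_pos by (simp add: divide_le_eq exp_minus field_simps)
  qed (use t_pos n p in auto)
  also have "\<dots> = exp (- real t)"
    by (simp add: exp_of_nat_mult[symmetric] exp_add[symmetric])
  also have "\<dots> \<le> exp (- (2 * ln n))" using t(2) by simp
  also have "\<dots> = 1 / n\<^sup>2"
    using n exp_of_nat_mult[of 2 "ln n"] by (simp add: exp_minus inverse_eq_divide)
  finally have "n * (n ^ t / fact t * p ^ t) \<le> n * (1 / n\<^sup>2)" using n by (intro mult_left_mono) auto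
  thus ?thesis using n by (simp add: power2_eq_square mult.assoc)
qed

section \<open>The random game\<close>

locale random_game =
  fixes lam \<alpha> G P0 N0 \<sigma>max \<epsilon> :: real and S :: nat and D :: "(real \<times> real) set"
    and l :: "nat \<Rightarrow> real" and K :: "nat \<Rightarrow> nat" and d :: "nat \<Rightarrow> nat \<Rightarrow> nat"
    and P :: "nat \<Rightarrow> (nat \<Rightarrow> real \<times> real) \<Rightarrow> nat \<Rightarrow> real"
    and g :: "nat \<Rightarrow> (nat \<Rightarrow> real \<times> real) \<Rightarrow> nat \<Rightarrow> nat \<Rightarrow> real"
  assumes lam_pos: "0 < lam" and alpha_pos: "0 < \<alpha>" and G_pos: "0 < G" and P0_pos: "0 < P0"
    and N0_pos: "0 < N0" and eps_pos: "0 < \<epsilon>"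
    and D_sets: "D \<in> sets lborel" and D_measure: "emeasure lborel D = ennreal (1 / lam)"
    and channels: "\<And>N. 2 \<le> N \<Longrightarrow> 1 \<le> l N \<and> real (K N) = real N / l N"
    and load_tendsto: "(\<lambda>N. l N * (ln (real N) / real N) powr (\<alpha> / (\<alpha> + 2))) \<longlonglongrightarrow> 0"
    and dest: "\<And>N n. 2 \<le> N \<Longrightarrow> n < N \<Longrightarrow> d N n < N \<and> d N n \<noteq> n"
    and card_dest_le: "\<And>N j. 2 \<le> N \<Longrightarrow> j < N \<Longrightarrow> card {m. m < N \<and> d N m = j} \<le> S"
    and power_bounds: "\<And>N x n. 2 \<le> N \<Longrightarrow> x \<in> PiE {..<N} (\<lambda>_. D) \<Longrightarrow> n < N \<Longrightarrow>
           0 < P N x n \<and> P N x n \<le> P0 * (ln (real N) / real N) powr (\<alpha> / 2)"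
    and snr_le: "\<And>N x n. 2 \<le> N \<Longrightarrow> x \<in> PiE {..<N} (\<lambda>_. D) \<Longrightarrow> n < N \<Longrightarrow>
           g N x n (d N n) * P N x n / N0 \<le> \<sigma>max"
    and gain_bounds: "\<And>N x i j. 0 \<le> g N x i j \<and> g N x i j \<le> G * dist (x i) (x j) powr (- \<alpha>)"
begin

definition log_ratio :: "nat \<Rightarrow> real" where
  "log_ratio N = ln (real N) / real N"

definition load_scale :: "nat \<Rightarrow> real" where
  "load_scale N = real N * log_ratio N powr (\<alpha> / (\<alpha> + 2))"

text \<open>This radius makes the expected number of near neighbours, N ball_prob N, and the total far
  interference, N far_interference N, both proportional to load_scale N.\<close>
definition radius :: "nat \<Rightarrow> real" where
  "radius N = log_ratio N powr (\<alpha> / (\<alpha> + 2) / 2)"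

definition ball_prob :: "nat \<Rightarrow> real" where
  "ball_prob N = 4 * lam * (radius N)\<^sup>2"

definition cluster_size :: "nat \<Rightarrow> nat" where
  "cluster_size N = nat \<lceil>exp 2 * (real N * ball_prob N) + 2 * ln (real N)\<rceil>"

definition far_interference :: "nat \<Rightarrow> real" where
  "far_interference N = G * radius N powr (- \<alpha>) * (P0 * log_ratio N powr (\<alpha> / 2))"

definition rate_cap :: real where
  "rate_cap = max 0 (log 2 (1 + \<sigma>max))"

text \<open>Since 1 + cluster_size N \<le> (4 e^2 lam + 2 + 2 / ln 2) load_scale N and
  N far_interference N = G P0 load_scale N, the hypothesis of good_event_if_many_channels
  follows from load_constant * load_scale N < K N.\<close>
definition load_constant :: real where
  "load_constant = (1 + 2 / \<epsilon> * rate_cap * real S) * (4 * exp 2 * lam + 2 + 2 / ln 2)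
     + (1 / ((2 powr (\<epsilon> / 2) - 1) * N0) + 2 / \<epsilon> / (N0 * ln 2)) * G * P0"

definition large :: "nat \<Rightarrow> bool" where
  "large N \<longleftrightarrow> 2 \<le> N \<and> load_constant * load_scale N < real (K N)"

text \<open>Empty for the finitely many N that are not large, which does not affect the limit.\<close>
definition good_configs :: "nat \<Rightarrow> (nat \<Rightarrow> real \<times> real) set" where
  "good_configs N =
     (if large N then PiE {..<N} (\<lambda>_. D) - clustered N (cluster_size N) (radius N) else {})"

lemma log_ratio_pos_le_one:
  assumes "2 \<le> N" shows "0 < log_ratio N" "log_ratio N \<le> 1"
  using assms ln_le_minus_one[of "real N"] by (auto simp: log_ratio_def)

lemma radius_nonneg: "0 \<le> radius N"
  unfolding radius_def by simp

lemma radius_sq: "(radius N)\<^sup>2 = log_ratio N powr (\<alpha> / (\<alpha> + 2))"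
  unfolding radius_def power2_eq_square powr_add[symmetric] by (simp only: field_sum_of_halves)

lemma expected_neighbours_eq: "real N * ball_prob N = 4 * lam * load_scale N"
  unfolding ball_prob_def load_scale_def radius_sq by simp

lemma total_far_interference_eq: "real N * far_interference N = G * P0 * load_scale N"
proof -
  define a where "a = \<alpha> / (\<alpha> + 2)"
  have "a / 2 * (- \<alpha>) + \<alpha> / 2 = a" unfolding a_def using alpha_pos by (simp add: field_simps)
  hence "radius N powr (- \<alpha>) * log_ratio N powr (\<alpha> / 2) = log_ratio N powr a"
    unfolding radius_def a_def powr_powr by (simp add: powr_add[symmetric])
  thus ?thesis unfolding far_interference_def load_scale_def a_def by (simp add: algebra_simps)
qed

lemma ln_le_load_scale:
  assumes N: "2 \<le> N" shows "ln (real N) \<le> load_scale N"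
proof -
  have X: "0 < log_ratio N" "log_ratio N \<le> 1" using log_ratio_pos_le_one[OF N] by auto
  have "ln (real N) = real N * log_ratio N powr 1" unfolding log_ratio_def using N X by simp
  also have "\<dots> \<le> real N * log_ratio N powr (\<alpha> / (\<alpha> + 2))"
    using X alpha_pos by (intro mult_left_mono powr_mono') auto
  finally show ?thesis unfolding load_scale_def .
qed

lemma cluster_size_bounds:
  assumes N: "2 \<le> N"
  shows "exp 2 * (real N * ball_prob N) \<le> real (cluster_size N)"
    and "2 * ln (real N) \<le> real (cluster_size N)"
    and "real (cluster_size N) \<le> exp 2 * (real N * ball_prob N) + 2 * ln (real N) + 1"
proof -
  define y where "y = exp 2 * (real N * ball_prob N) + 2 * ln (real N)"
  have "0 \<le> ball_prob N" "0 \<le> ln (real N)" unfolding ball_prob_def using lam_pos N by auto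
  hence "0 \<le> exp 2 * (real N * ball_prob N)" "0 \<le> y" unfolding y_def by auto
  moreover have "real (cluster_size N) = of_int \<lceil>y\<rceil>"
    unfolding cluster_size_def y_def[symmetric] using \<open>0 \<le> y\<close> by simp
  ultimately show "exp 2 * (real N * ball_prob N) \<le> real (cluster_size N)"
      "2 * ln (real N) \<le> real (cluster_size N)"
      "real (cluster_size N) \<le> exp 2 * (real N * ball_prob N) + 2 * ln (real N) + 1"
    using \<open>0 \<le> ln (real N)\<close> unfolding y_def by linarith+
qed

lemma eventually_large: "eventually large sequentially"
proof -
  have "(\<lambda>N. load_constant * (l N * (ln (real N) / real N) powr (\<alpha> / (\<alpha> + 2)))) \<longlonglongrightarrow> load_constant * 0"
    by (intro tendsto_mult tendsto_const load_tendsto)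
  hence "eventually (\<lambda>N. load_constant * (l N * log_ratio N powr (\<alpha> / (\<alpha> + 2))) < 1) sequentially"
    unfolding log_ratio_def by (intro order_tendstoD) auto
  thus ?thesis using eventually_ge_at_top[of 2]
  proof eventually_elim
    case (elim N)
    have l: "1 \<le> l N" "real (K N) = real N / l N" using channels[OF elim(2)] by auto
    hence "load_scale N = l N * log_ratio N powr (\<alpha> / (\<alpha> + 2)) * real (K N)"
      unfolding load_scale_def by simp
    moreover have "0 < real (K N)" using l elim(2) by simp
    ultimately show ?case
      using elim mult_strict_right_mono[OF elim(1), of "real (K N)"] unfolding large_def
      by (simp add: mult.assoc)
  qed
qed

lemma many_channels_if_large:
  assumes "large N"
  shows "2 / \<epsilon> * (rate_cap * real S * (1 + real (cluster_size N))
        + real N * far_interference N / (N0 * ln 2))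
    < real (K N) - (1 + real (cluster_size N)
        + real N * far_interference N / ((2 powr (\<epsilon> / 2) - 1) * N0))"
proof -
  have N: "2 \<le> N" using assms unfolding large_def by simp
  define t where "t = real (cluster_size N)"
  define w where "w = load_scale N"
  define A1 where "A1 = 1 + 2 / \<epsilon> * rate_cap * real S"
  define A3 where "A3 = 1 / ((2 powr (\<epsilon> / 2) - 1) * N0) + 2 / \<epsilon> / (N0 * ln 2)"
  have "0 < 2 powr (\<epsilon> / 2) - 1" using eps_pos by simp
  hence "0 \<le> A3" unfolding A3_def using eps_pos N0_pos
    by (intro add_nonneg_nonneg less_imp_le divide_pos_pos mult_pos_pos) auto
  have "0 \<le> A1" unfolding A1_def rate_cap_def using eps_pos by auto
  have "ln 2 \<le> ln (real N)" using N by simp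
  hence "ln 2 \<le> w" using ln_le_load_scale[OF N] unfolding w_def by linarith
  hence "2 \<le> 2 / ln 2 * w" by (simp add: field_simps)
  moreover have "t \<le> exp 2 * (4 * lam * w) + 2 * w + 1"
    using cluster_size_bounds(3)[OF N] ln_le_load_scale[OF N]
    unfolding t_def w_def expected_neighbours_eq[symmetric] by linarith
  ultimately have "1 + t \<le> (4 * exp 2 * lam + 2 + 2 / ln 2) * w" by (simp add: algebra_simps)
  hence "A1 * (1 + t) \<le> A1 * ((4 * exp 2 * lam + 2 + 2 / ln 2) * w)"
    using \<open>0 \<le> A1\<close> by (rule mult_left_mono)
  hence "A1 * (1 + t) + A3 * (real N * far_interference N) \<le> load_constant * w"
    using total_far_interference_eq
    unfolding load_constant_def A1_def[symmetric] A3_def[symmetric] w_def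
    by (simp add: algebra_simps)
  also have "\<dots> < real (K N)" using assms unfolding large_def w_def by simp
  finally show ?thesis unfolding A1_def A3_def t_def by (simp add: algebra_simps add_divide_distrib)
qed

lemma sparse_interference_if_not_clustered:
  assumes N: "2 \<le> N" and x: "x \<in> PiE {..<N} (\<lambda>_. D)" "x \<notin> clustered N (cluster_size N) (radius N)"
  shows "sparse_interference N N0 \<sigma>max (far_interference N) (d N) (g N x) (P N x)
    (\<lambda>i j. dist (x i) (x j) \<le> radius N) S (cluster_size N)"
proof (unfold_locales)
  have "0 < log_ratio N" using log_ratio_pos_le_one[OF N] by simp
  hence radius_pos: "0 < radius N" unfolding radius_def by simp
  show "0 < N0" by (rule N0_pos)
  show "0 \<le> far_interference N" unfolding far_interference_def using G_pos P0_pos by simp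
  fix i j m n :: nat
  show "n < N \<Longrightarrow> d N n < N \<and> d N n \<noteq> n" using dest[OF N] .
  show "j < N \<Longrightarrow> card {m. m < N \<and> d N m = j} \<le> S" using card_dest_le[OF N] .
  show "0 \<le> g N x i j" using gain_bounds by simp
  show "m < N \<Longrightarrow> 0 < P N x m" using power_bounds[OF N x(1)] by simp
  show "m < N \<Longrightarrow> g N x m (d N m) * P N x m / N0 \<le> \<sigma>max" using snr_le[OF N x(1)] .
  show "(dist (x i) (x j) \<le> radius N) \<longleftrightarrow> (dist (x j) (x i) \<le> radius N)" by (simp add: dist_commute)
  show "i < N \<Longrightarrow> card {j. j < N \<and> j \<noteq> i \<and> dist (x i) (x j) \<le> radius N} \<le> cluster_size N"
    using x(2) unfolding clustered_def by auto
  assume ij: "i < N" "j < N" "i \<noteq> j" "\<not> dist (x i) (x j) \<le> radius N"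
  have "g N x i j \<le> G * dist (x i) (x j) powr (- \<alpha>)" using gain_bounds by simp
  also have "\<dots> \<le> G * radius N powr (- \<alpha>)"
    using ij(4) radius_pos alpha_pos G_pos by (intro mult_left_mono powr_mono2') auto
  finally have "g N x i j * P N x i \<le> G * radius N powr (- \<alpha>) * (P0 * log_ratio N powr (\<alpha> / 2))"
    using power_bounds[OF N x(1) ij(1)] gain_bounds[of N x i j] unfolding log_ratio_def
    by (intro mult_mono) auto
  thus "g N x i j * P N x i \<le> far_interference N" unfolding far_interference_def .
qed

lemma good_event_if_not_clustered:
  assumes "large N" and x: "x \<in> PiE {..<N} (\<lambda>_. D)" "x \<notin> clustered N (cluster_size N) (radius N)"
  shows "good_event N (K N) (rate N N0 (d N) (g N x) (P N x)) \<epsilon>"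
proof -
  have N: "2 \<le> N" using assms(1) unfolding large_def by simp
  interpret sparse_interference N N0 \<sigma>max "far_interference N" "d N" "g N x" "P N x"
      "\<lambda>i j. dist (x i) (x j) \<le> radius N" S "cluster_size N"
    using sparse_interference_if_not_clustered[OF N x] .
  show ?thesis
    using good_event_if_many_channels[OF eps_pos] many_channels_if_large[OF assms(1)]
    unfolding rate_max_def rate_cap_def by simp
qed

lemma uniform_measure_D:
  "prob_space (uniform_measure lborel D)" "sets (uniform_measure lborel D) = sets borel"
  using D_sets D_measure lam_pos by (auto intro!: prob_space_uniform_measure)

abbreviation config_space :: "nat \<Rightarrow> (nat \<Rightarrow> real \<times> real) measure" where
  "config_space N \<equiv> PiM {..<N} (\<lambda>_. uniform_measure lborel D)"

abbreviation clustered_configs :: "nat \<Rightarrow> (nat \<Rightarrow> real \<times> real) set" where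
  "clustered_configs N \<equiv> space (config_space N) \<inter> clustered N (cluster_size N) (radius N)"

lemma PiE_D_sets: "PiE {..<N} (\<lambda>_. D) \<in> sets (config_space N)"
  using D_sets by (intro sets_PiM_I_finite) auto

lemma ball_prob_bound:
  "emeasure (uniform_measure lborel D) (cball y (radius N)) \<le> ennreal (ball_prob N)"
  unfolding ball_prob_def
  by (rule emeasure_uniform_measure_cball_le[OF D_sets D_measure lam_pos radius_nonneg])

lemma clustered_configs_sets: "clustered_configs N \<in> sets (config_space N)"
  using lam_pos
  by (intro measure_clustered_le(1)[OF uniform_measure_D ball_prob_bound]) (simp add: ball_prob_def)

lemma measure_clustered_configs_le:
  "measure (config_space N) (clustered_configs N)
     \<le> real N * (real N ^ cluster_size N / fact (cluster_size N)) * ball_prob N ^ cluster_size N"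
  using lam_pos
  by (intro measure_clustered_le(2)[OF uniform_measure_D ball_prob_bound]) (simp add: ball_prob_def)

lemma good_configs_eq:
  "large N \<Longrightarrow> good_configs N = PiE {..<N} (\<lambda>_. D) - clustered_configs N"
  unfolding good_configs_def by (auto simp: space_PiM PiE_def Pi_def)

lemma good_configs_sets: "good_configs N \<in> sets (config_space N)"
  using good_configs_eq[of N] PiE_D_sets clustered_configs_sets unfolding good_configs_def
  by (cases "large N") auto

lemma good_configs_subset:
  "good_configs N
    \<subseteq> {x \<in> PiE {..<N} (\<lambda>_. D). good_event N (K N) (rate N N0 (d N) (g N x) (P N x)) \<epsilon>}"
  using good_event_if_not_clustered unfolding good_configs_def by auto

lemma measure_good_configs_ge:
  assumes "large N"
  shows "1 - 1 / real N \<le> measure (config_space N) (good_configs N)"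
proof -
  interpret prob_space "config_space N" by (intro prob_space_PiM uniform_measure_D(1))
  interpret uniform: prob_space "uniform_measure lborel D" by (rule uniform_measure_D(1))
  interpret product_sigma_finite "\<lambda>_. uniform_measure lborel D" by unfold_locales
  have N: "2 \<le> N" using assms unfolding large_def by simp
  have "emeasure (config_space N) (PiE {..<N} (\<lambda>_. D))
      = (\<Prod>i<N. emeasure (uniform_measure lborel D) D)"
    using D_sets by (intro emeasure_PiM) auto
  also have "\<dots> = 1" using D_measure lam_pos D_sets by (simp add: emeasure_uniform_measure_1)
  finally have "prob (PiE {..<N} (\<lambda>_. D)) = 1" by (simp add: emeasure_eq_measure)
  moreover have "prob (clustered_configs N) \<le> 1 / real N"
    using measure_clustered_configs_le[of N]
      union_bound_tail_le[of "real N" "ball_prob N" "cluster_size N"]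
      cluster_size_bounds(1,2)[OF N] N lam_pos
    unfolding ball_prob_def by force
  moreover have "prob (good_configs N)
      = prob (PiE {..<N} (\<lambda>_. D)) - prob (PiE {..<N} (\<lambda>_. D) \<inter> clustered_configs N)"
    unfolding good_configs_eq[OF assms] using PiE_D_sets clustered_configs_sets
    by (rule finite_measure_Diff')
  moreover have "prob (PiE {..<N} (\<lambda>_. D) \<inter> clustered_configs N) \<le> prob (clustered_configs N)"
    using clustered_configs_sets by (intro finite_measure_mono) auto
  ultimately show ?thesis by linarith
qed

lemma measure_good_configs_tendsto: "(\<lambda>N. measure (config_space N) (good_configs N)) \<longlonglongrightarrow> 1"
proof (rule tendsto_sandwich[of "\<lambda>N. 1 - 1 / real N" _ _ "\<lambda>_. 1"])
  show "eventually (\<lambda>N. 1 - 1 / real N \<le> measure (config_space N) (good_configs N)) sequentially"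
    using eventually_large by eventually_elim (rule measure_good_configs_ge)
  show "eventually (\<lambda>N. measure (config_space N) (good_configs N) \<le> 1) sequentially"
    by (intro always_eventually allI prob_space.prob_le_1 prob_space_PiM uniform_measure_D(1))
  show "(\<lambda>N. 1 - 1 / real N) \<longlonglongrightarrow> 1"
    using tendsto_diff[OF tendsto_const lim_1_over_n, of "1::real"] by simp
qed simp

end

lemma gain_nonneg_le_path_loss:
  assumes "0 < G"
  shows "0 \<le> gain G \<alpha> \<theta>T \<theta>R phiT phiR x i j
    \<and> gain G \<alpha> \<theta>T \<theta>R phiT phiR x i j \<le> G * dist (x i) (x j) powr (- \<alpha>)"
  using assms unfolding gain_def by auto

text \<open>Only the domination of the gain by the path loss G r^(-\<alpha>) is used.\<close>
theorem lemma4: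
  fixes lam \<alpha> G \<theta>T \<theta>R P0 N0 \<sigma>max \<epsilon> :: real
    and S :: nat
    and D :: "(real \<times> real) set"
    and l :: "nat \<Rightarrow> real"
    and K :: "nat \<Rightarrow> nat"
    and d :: "nat \<Rightarrow> nat \<Rightarrow> nat"
    and phiT phiR :: "nat \<Rightarrow> nat \<Rightarrow> real"
    and P :: "nat \<Rightarrow> (nat \<Rightarrow> real \<times> real) \<Rightarrow> nat \<Rightarrow> real"
  assumes "lam > 0" "\<alpha> > 0" "G > 0" "P0 > 0" "N0 > 0" "S > 0" "\<epsilon> > 0"
    and "0 < \<theta>T" "\<theta>T \<le> 2 * pi" "0 < \<theta>R" "\<theta>R \<le> 2 * pi"
    and "closed D" "emeasure lborel D = ennreal (1 / lam)"
    and "\<And>N. N \<ge> 2 \<Longrightarrow> l N \<ge> 1 \<and> real (K N) = real N / l N"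
    and "(\<lambda>N. l N * (ln (real N) / real N) powr (\<alpha> / (\<alpha> + 2))) \<longlonglongrightarrow> 0"
    and "\<And>N n. N \<ge> 2 \<Longrightarrow> n < N \<Longrightarrow> d N n < N \<and> d N n \<noteq> n"
    and "\<And>N j. N \<ge> 2 \<Longrightarrow> j < N \<Longrightarrow> card {m. m < N \<and> d N m = j} \<le> S"
    and "\<And>N x n. N \<ge> 2 \<Longrightarrow> x \<in> PiE {..<N} (\<lambda>_. D) \<Longrightarrow> n < N \<Longrightarrow>
           0 < P N x n \<and> P N x n \<le> P0 * (ln (real N) / real N) powr (\<alpha> / 2)"
    and "\<And>N x n. N \<ge> 2 \<Longrightarrow> x \<in> PiE {..<N} (\<lambda>_. D) \<Longrightarrow> n < N \<Longrightarrow>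
           gain G \<alpha> \<theta>T \<theta>R (phiT N) (phiR N) x n (d N n) * P N x n / N0 \<le> \<sigma>max"
  shows "\<exists>A. (\<forall>N. A N \<in> sets (PiM {..<N} (\<lambda>_. uniform_measure lborel D))
              \<and> A N \<subseteq> {x \<in> PiE {..<N} (\<lambda>_. D).
                  good_event N (K N)
                    (rate N N0 (d N) (gain G \<alpha> \<theta>T \<theta>R (phiT N) (phiR N) x) (P N x)) \<epsilon>})
           \<and> (\<lambda>N. measure (PiM {..<N} (\<lambda>_. uniform_measure lborel D)) (A N)) \<longlonglongrightarrow> 1"
proof -
  interpret random_game lam \<alpha> G P0 N0 \<sigma>max \<epsilon> S D l K d P "\<lambda>N x. gain G \<alpha> \<theta>T \<theta>R (phiT N) (phiR N) x"
    using assms gain_nonneg_le_path_loss[OF assms(3)] by unfold_locales (auto simp: borel_closed)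
  show ?thesis
    by (intro exI[of _ good_configs] conjI allI good_configs_sets good_configs_subset
        measure_good_configs_tendsto)
qed

end
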